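(* Let $\mathcal P$ be a pyramid. If there exists $r>0$ such that $$\inf_{X\in\mathcal P}\sup_{x\in X}\mu_X(B_r(x))=0,$$ then there is no mm-space $X$ with $\mathcal P=\mathcal P_X$.
   Context: An mm-space is a triple $(X,d_X,\mu_X)$ with $(X,d_X)$ complete separable metric and $\mu_X$ a Borel probability measure; $\mathcal X$ is the set of mm-isomorphism classes. $Y\prec X$ means there is a 1-Lipschitz $f:X\to Y$ with $f_*\mu_X=\mu_Y$. The box distance $\square(X,Y)$ is the infimum of $\max\{\operatorname{dis}(S),1-\pi(S)\}$ over couplings $\pi$ of $\mu_X,\mu_Y$ and Borel $S\subset X\times Y$, $\operatorname{dis}(S)=\sup\{|d_X(x,x')-d_Y(y,y')|:(x,y),(x',y')\in S\}$. A pyramid is a nonempty box-closed subset of $\mathcal X$ closed downward under $\prec$ and directed; $\mathcal P_X=\{Y\in\mathcal X:Y\prec X\}$. $B_r(x)$ denotes the closed ball of radius $r$ about $x$. *)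

theory Defs
  imports "HOL-Analysis.Analysis" "HOL-Probability.Probability"
begin

text \<open>An mm-space is represented concretely on the ground type real (every complete
separable metric space has cardinality at most the continuum, so every mm-space is
mm-isomorphic to one of these).\<close>

record mmspace =
  mm_carrier :: "real set"
  mm_dist    :: "real \<Rightarrow> real \<Rightarrow> real"
  mm_meas    :: "real measure"

definition mm_borel :: "real set \<Rightarrow> (real \<Rightarrow> real \<Rightarrow> real) \<Rightarrow> real measure" where
  "mm_borel M d = sigma M {U. openin (Metric_space.mtopology M d) U}"

definition mm_space :: "mmspace \<Rightarrow> bool" where
  "mm_space X \<longleftrightarrow>
     Metric_space (mm_carrier X) (mm_dist X)
   \<and> Metric_space.mcomplete (mm_carrier X) (mm_dist X)
   \<and> separable_space (Metric_space.mtopology (mm_carrier X) (mm_dist X))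
   \<and> space (mm_meas X) = mm_carrier X
   \<and> sets (mm_meas X) = sets (mm_borel (mm_carrier X) (mm_dist X))
   \<and> prob_space (mm_meas X)"

definition dominated_by :: "mmspace \<Rightarrow> mmspace \<Rightarrow> bool" (infix "\<prec>" 50) where
  "Y \<prec> X \<longleftrightarrow> (\<exists>f. f ` mm_carrier X \<subseteq> mm_carrier Y
      \<and> (\<forall>x\<in>mm_carrier X. \<forall>x'\<in>mm_carrier X. mm_dist Y (f x) (f x') \<le> mm_dist X x x')
      \<and> f \<in> measurable (mm_meas X) (mm_meas Y)
      \<and> distr (mm_meas X) (mm_meas Y) f = mm_meas Y)"

definition couplings :: "mmspace \<Rightarrow> mmspace \<Rightarrow> (real \<times> real) measure set" where
  "couplings X Y = {\<pi>. sets \<pi> = sets (mm_meas X \<Otimes>\<^sub>M mm_meas Y) \<and> prob_space \<pi>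
       \<and> distr \<pi> (mm_meas X) fst = mm_meas X \<and> distr \<pi> (mm_meas Y) snd = mm_meas Y}"

definition dis :: "mmspace \<Rightarrow> mmspace \<Rightarrow> (real \<times> real) set \<Rightarrow> ereal" where
  "dis X Y S = (SUP p\<in>S \<times> S. ereal \<bar>mm_dist X (fst (fst p)) (fst (snd p))
                                   - mm_dist Y (snd (fst p)) (snd (snd p))\<bar>)"

definition box :: "mmspace \<Rightarrow> mmspace \<Rightarrow> real" where
  "box X Y = real_of_ereal (INF q\<in>couplings X Y \<times> sets (mm_meas X \<Otimes>\<^sub>M mm_meas Y).
       max (dis X Y (snd q)) (ereal (1 - measure (fst q) (snd q))))"

definition box_closed :: "mmspace set \<Rightarrow> bool" where
  "box_closed P \<longleftrightarrow> (\<forall>X Xs. mm_space X \<and> (\<forall>n. Xs n \<in> P) \<and> (\<lambda>n. box (Xs n) X) \<longlonglongrightarrow> 0 \<longrightarrow> X \<in> P)"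

definition pyramid :: "mmspace set \<Rightarrow> bool" where
  "pyramid P \<longleftrightarrow> P \<noteq> {} \<and> (\<forall>X\<in>P. mm_space X) \<and> box_closed P
     \<and> (\<forall>X\<in>P. \<forall>Y. mm_space Y \<and> Y \<prec> X \<longrightarrow> Y \<in> P)
     \<and> (\<forall>X\<in>P. \<forall>X'\<in>P. \<exists>Y\<in>P. X \<prec> Y \<and> X' \<prec> Y)"

definition pyramid_of :: "mmspace \<Rightarrow> mmspace set" where
  "pyramid_of X = {Y. mm_space Y \<and> Y \<prec> X}"

definition cball_mm :: "mmspace \<Rightarrow> real \<Rightarrow> real \<Rightarrow> real set" where
  "cball_mm X x r = Metric_space.mcball (mm_carrier X) (mm_dist X) x r"

end

theory Submission
  imports Defs
begin

text \<open>Every mm-space X carries a ball B_r(x0) of positive measure, since countably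
many r-balls around a dense subset cover it. A 1-Lipschitz measure-preserving map
f : X \<rightarrow> Y sends B_r(x0) into B_r(f x0), so every Y \<prec> X has a ball of at least the
same measure. Hence the infimum over P_X of the largest r-ball measure is positive.\<close>

lemma closedin_in_sets_mm_borel:
  assumes "Metric_space M d" and "closedin (Metric_space.mtopology M d) C"
  shows "C \<in> sets (mm_borel M d)"
proof -
  interpret Metric_space M d by fact
  have opens: "{U. openin mtopology U} \<subseteq> Pow M"
    using openin_subset by fastforce
  have "C = M - (M - C)"
    using assms(2) closedin_subset by fastforce
  also have "\<dots> \<in> sigma_sets M {U. openin mtopology U}"
    using assms(2) by (intro sigma_sets.Compl sigma_sets.Basic) (auto simp: closedin_def)
  finally show ?thesis
    using opens by (simp add: mm_borel_def sets_measure_of)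
qed

lemma sets_mm_meas_cball_mm:
  assumes "mm_space X"
  shows "cball_mm X x r \<in> sets (mm_meas X)"
  using assms Metric_space.closedin_mcball closedin_in_sets_mm_borel
  by (fastforce simp: mm_space_def cball_mm_def)

lemma mm_space_ex_cball_mm_measure_pos:
  assumes X: "mm_space X" and "r > 0"
  obtains x where "x \<in> mm_carrier X" and "measure (mm_meas X) (cball_mm X x r) > 0"
proof -
  interpret Metric_space "mm_carrier X" "mm_dist X"
    using X by (simp add: mm_space_def)
  interpret prob_space "mm_meas X"
    using X by (simp add: mm_space_def)
  obtain C where C: "countable C" "C \<subseteq> mm_carrier X" "mtopology closure_of C = mm_carrier X"
    using X by (auto simp: mm_space_def separable_space_def)
  have cover: "space (mm_meas X) \<subseteq> (\<Union>c\<in>C. cball_mm X c r)"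
  proof
    fix x assume "x \<in> space (mm_meas X)"
    then have "x \<in> mtopology closure_of C" and "x \<in> mball x r"
      using X C(3) \<open>r > 0\<close> by (auto simp: mm_space_def)
    then obtain c where "c \<in> C" "c \<in> mball x r"
      unfolding closure_of_def using openin_mball by blast
    then show "x \<in> (\<Union>c\<in>C. cball_mm X c r)"
      by (auto simp: cball_mm_def commute)
  qed
  have "\<exists>x\<in>mm_carrier X. measure (mm_meas X) (cball_mm X x r) > 0"
  proof (rule ccontr)
    assume "\<not> ?thesis"
    then have "measure (mm_meas X) (cball_mm X c r) = 0" if "c \<in> C" for c
      using that C(2) by (meson measure_nonneg not_less order_antisym subsetD)
    then have "cball_mm X c r \<in> null_sets (mm_meas X)" if "c \<in> C" for c
      using that sets_mm_meas_cball_mm[OF X] by (simp add: emeasure_eq_measure null_sets_def)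
    then have "(\<Union>c\<in>C. cball_mm X c r) \<in> null_sets (mm_meas X)"
      by (rule null_sets_UN'[OF C(1)])
    then have "space (mm_meas X) \<in> null_sets (mm_meas X)"
      using cover null_sets_subset by blast
    then show False
      using prob_space by (simp add: null_sets_def emeasure_eq_measure)
  qed
  then show ?thesis
    using that by blast
qed

lemma dominated_by_refl:
  assumes "mm_space X"
  shows "dominated_by X X"
  unfolding dominated_by_def
  by (rule exI[of _ "\<lambda>x. x"]) (use assms in \<open>auto simp: mm_space_def\<close>)

lemma dominated_by_cball_mm_measure_le:
  assumes X: "mm_space X" and Y: "mm_space Y" and "dominated_by Y X" and x: "x \<in> mm_carrier X"
  obtains y where "y \<in> mm_carrier Y"
    and "measure (mm_meas X) (cball_mm X x r) \<le> measure (mm_meas Y) (cball_mm Y y r)"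
proof -
  obtain f where f_into: "f ` mm_carrier X \<subseteq> mm_carrier Y"
    and f_lip: "\<forall>x\<in>mm_carrier X. \<forall>x'\<in>mm_carrier X. mm_dist Y (f x) (f x') \<le> mm_dist X x x'"
    and f_meas: "f \<in> measurable (mm_meas X) (mm_meas Y)"
    and f_push: "distr (mm_meas X) (mm_meas Y) f = mm_meas Y"
    using \<open>dominated_by Y X\<close> by (auto simp: dominated_by_def)
  interpret MX: Metric_space "mm_carrier X" "mm_dist X"
    using X by (simp add: mm_space_def)
  interpret MY: Metric_space "mm_carrier Y" "mm_dist Y"
    using Y by (simp add: mm_space_def)
  interpret prob_space "mm_meas X"
    using X by (simp add: mm_space_def)
  have fx: "f x \<in> mm_carrier Y"
    using f_into x by blast
  have ball_Y: "cball_mm Y (f x) r \<in> sets (mm_meas Y)"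
    by (rule sets_mm_meas_cball_mm[OF Y])
  have "cball_mm X x r \<subseteq> f -` cball_mm Y (f x) r \<inter> space (mm_meas X)"
  proof
    fix z assume "z \<in> cball_mm X x r"
    then have z: "z \<in> mm_carrier X" "mm_dist X x z \<le> r"
      by (auto simp: cball_mm_def)
    then have "mm_dist Y (f x) (f z) \<le> r"
      using f_lip x by (meson order_trans)
    then show "z \<in> f -` cball_mm Y (f x) r \<inter> space (mm_meas X)"
      using X z f_into fx by (auto simp: cball_mm_def mm_space_def)
  qed
  then have "measure (mm_meas X) (cball_mm X x r)
      \<le> measure (mm_meas X) (f -` cball_mm Y (f x) r \<inter> space (mm_meas X))"
    by (intro finite_measure_mono measurable_sets[OF f_meas ball_Y])
  also have "\<dots> = measure (distr (mm_meas X) (mm_meas Y) f) (cball_mm Y (f x) r)"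
    using measure_distr[OF f_meas ball_Y] by simp
  also have "\<dots> = measure (mm_meas Y) (cball_mm Y (f x) r)"
    using f_push by simp
  finally show ?thesis
    using fx that by blast
qed

lemma cball_mm_measure_le_SUP:
  assumes "mm_space Y" and "y \<in> mm_carrier Y"
  shows "measure (mm_meas Y) (cball_mm Y y r)
    \<le> (SUP z\<in>mm_carrier Y. measure (mm_meas Y) (cball_mm Y z r))"
proof -
  interpret prob_space "mm_meas Y"
    using assms(1) by (simp add: mm_space_def)
  show ?thesis
    by (rule cSUP_upper[OF assms(2)]) (auto intro: bdd_aboveI2[where M = 1])
qed

lemma INF_pyramid_of_SUP_cball_mm_measure_pos:
  assumes X: "mm_space X" and "r > 0"
  shows "(INF Y\<in>pyramid_of X. SUP y\<in>mm_carrier Y. measure (mm_meas Y) (cball_mm Y y r)) > 0"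
proof -
  obtain x where x: "x \<in> mm_carrier X" and pos: "measure (mm_meas X) (cball_mm X x r) > 0"
    using mm_space_ex_cball_mm_measure_pos[OF X \<open>r > 0\<close>] by blast
  have "pyramid_of X \<noteq> {}"
    using X dominated_by_refl by (auto simp: pyramid_of_def)
  then have "measure (mm_meas X) (cball_mm X x r)
      \<le> (INF Y\<in>pyramid_of X. SUP y\<in>mm_carrier Y. measure (mm_meas Y) (cball_mm Y y r))"
  proof (rule cINF_greatest)
    fix Y assume "Y \<in> pyramid_of X"
    then have Y: "mm_space Y" and "dominated_by Y X"
      by (auto simp: pyramid_of_def)
    then obtain y where "y \<in> mm_carrier Y"
      and "measure (mm_meas X) (cball_mm X x r) \<le> measure (mm_meas Y) (cball_mm Y y r)"
      using dominated_by_cball_mm_measure_le[OF X Y _ x] by blast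
    then show "measure (mm_meas X) (cball_mm X x r)
        \<le> (SUP y\<in>mm_carrier Y. measure (mm_meas Y) (cball_mm Y y r))"
      using cball_mm_measure_le_SUP[OF Y] order_trans by blast
  qed
  then show ?thesis
    using pos by linarith
qed

theorem proposition6p8:
  fixes P :: "mmspace set" and r :: real
  assumes "pyramid P"
    and "r > 0"
    and "(INF X\<in>P. SUP x\<in>mm_carrier X. measure (mm_meas X) (cball_mm X x r)) = 0"
  shows "\<not> (\<exists>X. mm_space X \<and> P = pyramid_of X)"
proof
  assume "\<exists>X. mm_space X \<and> P = pyramid_of X"
  then obtain X where X: "mm_space X" and "P = pyramid_of X"
    by blast
  then show False
    using INF_pyramid_of_SUP_cball_mm_measure_pos[OF X assms(2)] assms(3) by simp
qed

end
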